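(* Consider the Diophantine equation $n^2-(6s-1)n+6s^2=0$ in positive integers $(n,s)$. The maps $\iota_1(n,s)=(n,n-s)$ and $\iota_2(n,s)=(6s-1-n,s)$ send positive integer solutions to positive integer solutions, and the set of all positive integer solutions is exactly the set of pairs obtained from $(2,1)$ by finitely many applications of $\iota_1$ and $\iota_2$; that is, the solutions are $(2,1),(3,1),(3,2),(8,2),(8,6),(27,6),(27,21),(98,21),(98,77),(363,77),(363,286),\dots$, obtained by alternately applying $\iota_2$ and $\iota_1$ starting from $(2,1)$. *)

theory Defs
  imports Main
begin

definition is_sol :: "int \<times> int \<Rightarrow> bool" where
  "is_sol p \<longleftrightarrow> (case p of (n, s) \<Rightarrow> n > 0 \<and> s > 0 \<and> n^2 - (6*s - 1)*n + 6*s^2 = 0)"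

definition iota1 :: "int \<times> int \<Rightarrow> int \<times> int" where
  "iota1 p = (case p of (n, s) \<Rightarrow> (n, n - s))"

definition iota2 :: "int \<times> int \<Rightarrow> int \<times> int" where
  "iota2 p = (case p of (n, s) \<Rightarrow> (6*s - 1 - n, s))"

inductive_set orbit21 :: "(int \<times> int) set" where
  base: "(2, 1) \<in> orbit21"
| app1: "p \<in> orbit21 \<Longrightarrow> iota1 p \<in> orbit21"
| app2: "p \<in> orbit21 \<Longrightarrow> iota2 p \<in> orbit21"

end

theory Submission
  imports Defs
begin

text \<open>Vieta jumping. Read as a quadratic in \<open>n\<close>, the equation has root product \<open>6s\<^sup>2\<close>,
  so \<open>\<iota>\<^sub>2\<close> swaps the two roots and keeps them positive; read as a quadratic in \<open>s\<close>, it
  has root product \<open>(n\<^sup>2 + n)/6\<close> and \<open>\<iota>\<^sub>1\<close> swaps those roots. Both maps are involutions,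
  and applying whichever one shrinks the larger root strictly decreases \<open>n + s\<close>
  unless \<open>2s \<le> n \<le> 3s - 1/2\<close>, which forces \<open>(n, s) = (2, 1)\<close>.\<close>

lemma is_sol_iff_root_product_n:
  "is_sol (n, s) \<longleftrightarrow> n > 0 \<and> s > 0 \<and> n * (6*s - 1 - n) = 6 * s^2"
  by (auto simp: is_sol_def power2_eq_square algebra_simps)

lemma is_sol_iff_root_product_s:
  "is_sol (n, s) \<longleftrightarrow> n > 0 \<and> s > 0 \<and> 6 * s * (n - s) = n^2 + n"
  by (auto simp: is_sol_def power2_eq_square algebra_simps)

lemma is_sol_iota1:
  assumes "is_sol p"
  shows "is_sol (iota1 p)"
proof (cases p)
  case (Pair n s)
  with assms have n: "n > 0" and s: "s > 0" and eq: "6 * s * (n - s) = n^2 + n"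
    by (auto simp: is_sol_iff_root_product_s)
  have "6 * s * (n - s) > 0"
    using n by (simp add: eq power2_eq_square add_pos_pos)
  with s have "n - s > 0"
    by (simp add: zero_less_mult_iff)
  moreover have "6 * (n - s) * (n - (n - s)) = n^2 + n"
    using eq by (simp add: algebra_simps)
  ultimately show ?thesis
    using Pair n by (simp add: iota1_def is_sol_iff_root_product_s)
qed

lemma is_sol_iota2:
  assumes "is_sol p"
  shows "is_sol (iota2 p)"
proof (cases p)
  case (Pair n s)
  with assms have n: "n > 0" and s: "s > 0" and eq: "n * (6*s - 1 - n) = 6 * s^2"
    by (auto simp: is_sol_iff_root_product_n)
  have "n * (6*s - 1 - n) > 0"
    using s by (simp add: eq)
  with n have "6*s - 1 - n > 0"
    by (simp add: zero_less_mult_iff)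
  moreover have "(6*s - 1 - n) * (6*s - 1 - (6*s - 1 - n)) = 6 * s^2"
    using eq by (simp add: algebra_simps)
  ultimately show ?thesis
    using Pair s by (simp add: iota2_def is_sol_iff_root_product_n)
qed

lemma orbit21_is_sol: "p \<in> orbit21 \<Longrightarrow> is_sol p"
proof (induction rule: orbit21.induct)
  case base
  show ?case by (simp add: is_sol_def)
qed (simp_all add: is_sol_iota1 is_sol_iota2)

lemma is_sol_minimal:
  assumes "is_sol (n, s)" and "2*n \<le> 6*s - 1" and "2*s \<le> n"
  shows "(n, s) = (2, 1)"
proof -
  from assms(1) have n: "n > 0" and s: "s > 0" and eq: "n^2 - (6*s - 1)*n + 6*s^2 = 0"
    by (auto simp: is_sol_def)
  have factored: "(n - 2*s) * (n - 3*s) = n * (s - 1)"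
    using eq by (simp add: power2_eq_square algebra_simps)
  have "(n - 2*s) * (n - 3*s) \<le> 0"
    using assms(2,3) by (intro mult_nonneg_nonpos) auto
  moreover have "n * (s - 1) \<ge> 0"
    using n s by simp
  ultimately have "n * (s - 1) = 0" and "(n - 2*s) * (n - 3*s) = 0"
    using factored by auto
  with n assms(2,3) show ?thesis
    by auto
qed

lemma is_sol_in_orbit21: "is_sol (n, s) \<Longrightarrow> (n, s) \<in> orbit21"
proof (induction "nat (n + s)" arbitrary: n s rule: less_induct)
  case less
  then have n: "n > 0" and s: "s > 0"
    by (auto simp: is_sol_def)
  consider "2*n > 6*s - 1" | "2*s > n" | "2*n \<le> 6*s - 1" "2*s \<le> n"
    by linarith
  then show ?case
  proof cases
    case 1
    have sol: "is_sol (6*s - 1 - n, s)"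
      using is_sol_iota2[OF less.prems] by (simp add: iota2_def)
    then have "(6*s - 1 - n, s) \<in> orbit21"
      using 1 n s by (intro less.hyps) (auto simp: is_sol_def)
    from orbit21.app2[OF this] show ?thesis
      by (simp add: iota2_def)
  next
    case 2
    have sol: "is_sol (n, n - s)"
      using is_sol_iota1[OF less.prems] by (simp add: iota1_def)
    then have "(n, n - s) \<in> orbit21"
      using 2 n s by (intro less.hyps) (auto simp: is_sol_def)
    from orbit21.app1[OF this] show ?thesis
      by (simp add: iota1_def)
  next
    case 3
    then show ?thesis
      using is_sol_minimal[OF less.prems] orbit21.base by simp
  qed
qed

theorem mainTheorem10:
  shows "(\<forall>p. is_sol p \<longrightarrow> is_sol (iota1 p))
       \<and> (\<forall>p. is_sol p \<longrightarrow> is_sol (iota2 p))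
       \<and> {p. is_sol p} = orbit21"
  using is_sol_iota1 is_sol_iota2 is_sol_in_orbit21 orbit21_is_sol by auto

end
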